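(* Let $\Phi$ be an irreducible reduced root system with basis $\Delta$, Weyl group $W$ with length function $l$, highest root $\tilde\alpha$. For every positive long root $\alpha$, $l(x_\alpha s_{\tilde\alpha})=l(s_{\tilde\alpha})-l(x_\alpha)$.
   Context: Long roots are those of maximal length for a $W$-invariant scalar product $(\cdot|\cdot)$. $\tilde I=\{\alpha\in\Delta:(\tilde\alpha|\alpha)=0\}$, $\Phi_{\tilde I}^+$ the positive roots in the span of $\tilde I$, $X_{\tilde I}=\{w\in W:w(\Phi^+_{\tilde I})\subset\Phi^+\}$; for a long root $\alpha$, $x_\alpha$ is the unique element of $X_{\tilde I}$ with $x_\alpha(\tilde\alpha)=\alpha$ (it exists and is unique since $w\mapsto w(\tilde\alpha)$ induces a bijection $X_{\tilde I}\to\Phi_{\mathrm{lg}}$). *)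

theory Defs
  imports "HOL-Analysis.Analysis"
begin

text \<open>Root systems in a finite-dimensional real inner product space 'a (the ambient
  inner product plays the role of the W-invariant scalar product).\<close>

definition refl :: "'a::euclidean_space \<Rightarrow> 'a \<Rightarrow> 'a" where
  "refl a v = v - (2 * (v \<bullet> a) / (a \<bullet> a)) *\<^sub>R a"

definition root_system :: "'a::euclidean_space set \<Rightarrow> bool" where
  "root_system Phi \<longleftrightarrow> finite Phi \<and> 0 \<notin> Phi \<and> span Phi = UNIV \<and>
     (\<forall>a\<in>Phi. refl a ` Phi = Phi) \<and>
     (\<forall>a\<in>Phi. \<forall>b\<in>Phi. 2 * (b \<bullet> a) / (a \<bullet> a) \<in> \<int>)"

definition reduced_root_system :: "'a::euclidean_space set \<Rightarrow> bool" where
  "reduced_root_system Phi \<longleftrightarrow> root_system Phi \<and>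
     (\<forall>a\<in>Phi. \<forall>c::real. c *\<^sub>R a \<in> Phi \<longrightarrow> c = 1 \<or> c = -1)"

definition irreducible_root_system :: "'a::euclidean_space set \<Rightarrow> bool" where
  "irreducible_root_system Phi \<longleftrightarrow> root_system Phi \<and> Phi \<noteq> {} \<and>
     \<not> (\<exists>A B. A \<noteq> {} \<and> B \<noteq> {} \<and> A \<union> B = Phi \<and> A \<inter> B = {} \<and>
            (\<forall>a\<in>A. \<forall>b\<in>B. a \<bullet> b = 0))"

definition nonneg_int_comb :: "'a::euclidean_space set \<Rightarrow> 'a set" where
  "nonneg_int_comb D = {v. \<exists>k::'a \<Rightarrow> int. (\<forall>d\<in>D. k d \<ge> 0) \<and>
      v = (\<Sum>d\<in>D. of_int (k d) *\<^sub>R d)}"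

definition root_basis :: "'a::euclidean_space set \<Rightarrow> 'a set \<Rightarrow> bool" where
  "root_basis Phi Delta \<longleftrightarrow> Delta \<subseteq> Phi \<and> independent Delta \<and> span Delta = UNIV \<and>
     (\<forall>b\<in>Phi. b \<in> nonneg_int_comb Delta \<or> - b \<in> nonneg_int_comb Delta)"

definition pos_roots :: "'a::euclidean_space set \<Rightarrow> 'a set \<Rightarrow> 'a set" where
  "pos_roots Phi Delta = Phi \<inter> nonneg_int_comb Delta"

definition highest_root :: "'a::euclidean_space set \<Rightarrow> 'a set \<Rightarrow> 'a \<Rightarrow> bool" where
  "highest_root Phi Delta h \<longleftrightarrow> h \<in> Phi \<and> (\<forall>b\<in>Phi. h - b \<in> nonneg_int_comb Delta)"

definition refl_prod :: "'a::euclidean_space list \<Rightarrow> 'a \<Rightarrow> 'a" where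
  "refl_prod xs = foldr (\<lambda>a f. refl a \<circ> f) xs id"

definition weyl_group :: "'a::euclidean_space set \<Rightarrow> ('a \<Rightarrow> 'a) set" where
  "weyl_group Phi = {refl_prod xs | xs. set xs \<subseteq> Phi}"

definition weyl_length :: "'a::euclidean_space set \<Rightarrow> ('a \<Rightarrow> 'a) \<Rightarrow> nat" where
  "weyl_length Delta w = (LEAST n. \<exists>xs. length xs = n \<and> set xs \<subseteq> Delta \<and> w = refl_prod xs)"

definition long_roots :: "'a::euclidean_space set \<Rightarrow> 'a set" where
  "long_roots Phi = {a\<in>Phi. \<forall>b\<in>Phi. norm b \<le> norm a}"

definition I_tilde :: "'a::euclidean_space set \<Rightarrow> 'a \<Rightarrow> 'a set" where
  "I_tilde Delta h = {d\<in>Delta. h \<bullet> d = 0}"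

definition pos_roots_I :: "'a::euclidean_space set \<Rightarrow> 'a set \<Rightarrow> 'a set \<Rightarrow> 'a set" where
  "pos_roots_I Phi Delta I = pos_roots Phi Delta \<inter> span I"

definition X_I :: "'a::euclidean_space set \<Rightarrow> 'a set \<Rightarrow> 'a set \<Rightarrow> ('a \<Rightarrow> 'a) set" where
  "X_I Phi Delta I = {w\<in>weyl_group Phi. w ` pos_roots_I Phi Delta I \<subseteq> pos_roots Phi Delta}"

definition x_root :: "'a::euclidean_space set \<Rightarrow> 'a set \<Rightarrow> 'a \<Rightarrow> 'a \<Rightarrow> ('a \<Rightarrow> 'a)" where
  "x_root Phi Delta h a = (THE w. w \<in> X_I Phi Delta (I_tilde Delta h) \<and> w h = a)"

end

theory Submission
  imports Defs
begin

text \<open>The length of an element w of W equals the number of positive roots that w makes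
  negative. The reflection in the highest root h makes negative exactly the positive roots b
  with (h|b) > 0, while an element x of X_I keeps positive every positive root orthogonal
  to h. Hence the inversions of x s_h are inversions of s_h, and the remaining inversions of
  s_h are the roots -s_h(b) for the inversions b of x, which gives
  l(s_h) = l(x s_h) + l(x). For a long root a, conjugating a into the dominant chamber yields
  a long dominant root, which can only be h; a word of minimal inversion number sending h
  to a lies in X_I, and two elements of X_I with the same value at h differ by an element
  without inversions, i.e. by the identity.\<close>

lemma refl_linear: "linear (refl a)"
  unfolding refl_def
  by (auto intro!: linearI simp: algebra_simps inner_add_left add_divide_distrib scaleR_add_left)

lemma refl_inner: "a \<noteq> 0 \<Longrightarrow> refl a x \<bullet> refl a y = x \<bullet> y"
  unfolding refl_def by (simp add: algebra_simps inner_commute power2_eq_square)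

lemma refl_refl [simp]: "a \<noteq> 0 \<Longrightarrow> refl a (refl a x) = x"
  unfolding refl_def by (simp add: algebra_simps inner_commute)

lemma refl_self [simp]: "a \<noteq> 0 \<Longrightarrow> refl a a = - a"
  unfolding refl_def by (simp add: algebra_simps scaleR_2)

lemma refl_orth: "x \<bullet> a = 0 \<Longrightarrow> refl a x = x"
  unfolding refl_def by simp

lemma refl_conj:
  assumes "linear v" "\<And>x y. v x \<bullet> v y = x \<bullet> y"
  shows "refl (v a) (v x) = v (refl a x)"
  unfolding refl_def using assms by (simp add: linear_diff linear_scale)

lemma refl_prod_Nil [simp]: "refl_prod [] = id"
  by (simp add: refl_prod_def)

lemma refl_prod_Cons [simp]: "refl_prod (a # xs) = refl a \<circ> refl_prod xs"
  by (simp add: refl_prod_def)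

lemma refl_prod_append: "refl_prod (xs @ ys) = refl_prod xs \<circ> refl_prod ys"
  by (induction xs) auto

lemma refl_prod_snoc: "refl_prod (xs @ [a]) = refl_prod xs \<circ> refl a"
  by (simp add: refl_prod_append)

lemma refl_prod_linear: "linear (refl_prod xs)"
proof (induction xs)
  case Nil
  show ?case by (auto intro!: linearI)
next
  case (Cons a xs)
  show ?case using linear_compose[OF Cons refl_linear[of a]] by (simp add: o_def)
qed

lemma refl_prod_uminus: "refl_prod xs (- v) = - refl_prod xs v"
  by (rule linear_neg[OF refl_prod_linear])

lemma refl_prod_inner: "0 \<notin> set xs \<Longrightarrow> refl_prod xs x \<bullet> refl_prod xs y = x \<bullet> y"
  by (induction xs arbitrary: x y) (auto simp: refl_inner)

lemma refl_prod_rev_cancel: "0 \<notin> set xs \<Longrightarrow> refl_prod xs (refl_prod (rev xs) x) = x"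
  by (induction xs arbitrary: x) (auto simp: refl_prod_append)

lemma refl_prod_cancel_rev: "0 \<notin> set xs \<Longrightarrow> refl_prod (rev xs) (refl_prod xs x) = x"
  using refl_prod_rev_cancel[of "rev xs"] by simp


locale based_root_system =
  fixes Phi Delta :: "'a::euclidean_space set"
  assumes reduced: "reduced_root_system Phi" and basis: "root_basis Phi Delta"
begin

lemma finite_Phi: "finite Phi"
  and zero_notin_Phi: "0 \<notin> Phi"
  and refl_in_Phi: "a \<in> Phi \<Longrightarrow> b \<in> Phi \<Longrightarrow> refl a b \<in> Phi"
  and cartan_integer: "a \<in> Phi \<Longrightarrow> b \<in> Phi \<Longrightarrow> 2 * (b \<bullet> a) / (a \<bullet> a) \<in> \<int>"
  and multiple_in_Phi: "a \<in> Phi \<Longrightarrow> c *\<^sub>R a \<in> Phi \<Longrightarrow> c = 1 \<or> c = -1"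
  using reduced unfolding reduced_root_system_def root_system_def by auto

lemma Delta_subset: "Delta \<subseteq> Phi"
  and independent_Delta: "independent Delta"
  and span_Delta: "span Delta = UNIV"
  and root_sign: "b \<in> Phi \<Longrightarrow> b \<in> nonneg_int_comb Delta \<or> - b \<in> nonneg_int_comb Delta"
  using basis unfolding root_basis_def by auto

lemma finite_Delta: "finite Delta"
  using Delta_subset finite_Phi finite_subset by blast

lemma zero_notin_Delta: "0 \<notin> Delta"
  using Delta_subset zero_notin_Phi by auto

lemma uminus_in_Phi: "b \<in> Phi \<Longrightarrow> - b \<in> Phi"
  using refl_in_Phi[of b b] zero_notin_Phi by (metis refl_self)

lemma refl_prod_in_Phi: "set xs \<subseteq> Phi \<Longrightarrow> b \<in> Phi \<Longrightarrow> refl_prod xs b \<in> Phi"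
  by (induction xs arbitrary: b) (auto intro: refl_in_Phi)

definition coord :: "'a \<Rightarrow> 'a \<Rightarrow> real" where
  "coord v d = representation Delta v d"

definition pos_comb :: "'a \<Rightarrow> bool" where
  "pos_comb v \<longleftrightarrow> (\<forall>d\<in>Delta. 0 \<le> coord v d)"

lemma coord_diff: "coord (u - v) d = coord u d - coord v d"
  unfolding coord_def using representation_diff[OF independent_Delta] span_Delta by simp

lemma coord_add: "coord (u + v) d = coord u d + coord v d"
  unfolding coord_def using representation_add[OF independent_Delta] span_Delta by simp

lemma coord_uminus: "coord (- v) d = - coord v d"
  unfolding coord_def using representation_neg[OF independent_Delta] span_Delta by simp

lemma coord_scale: "coord (c *\<^sub>R v) d = c * coord v d"
  unfolding coord_def using representation_scale[OF independent_Delta] span_Delta by simp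

lemma coord_sum: "coord (sum f A) d = (\<Sum>i\<in>A. coord (f i) d)"
  unfolding coord_def using representation_sum[OF independent_Delta, of A f] span_Delta by simp

lemma coord_simple: "e \<in> Delta \<Longrightarrow> coord e d = (if d = e then 1 else 0)"
  unfolding coord_def using representation_basis[OF independent_Delta] by simp

lemma coord_expansion: "v = (\<Sum>d\<in>Delta. coord v d *\<^sub>R d)"
  unfolding coord_def using sum_representation_eq[OF independent_Delta _ finite_Delta] span_Delta
  by simp

lemma coord_inject: "(\<And>d. d \<in> Delta \<Longrightarrow> coord u d = coord v d) \<Longrightarrow> u = v"
  by (subst (1 2) coord_expansion) simp

lemma inner_coord_expansion: "m \<bullet> v = (\<Sum>d\<in>Delta. coord v d * (m \<bullet> d))"
  by (subst coord_expansion) (simp add: inner_sum_right)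

lemma refl_prod_coord_expansion: "refl_prod xs v = (\<Sum>d\<in>Delta. coord v d *\<^sub>R refl_prod xs d)"
  by (subst coord_expansion)
    (simp add: linear_sum[OF refl_prod_linear] linear_scale[OF refl_prod_linear])

lemma nonneg_int_comb_pos_comb: "v \<in> nonneg_int_comb Delta \<Longrightarrow> pos_comb v"
proof -
  assume "v \<in> nonneg_int_comb Delta"
  then obtain k where k: "\<forall>d\<in>Delta. k d \<ge> 0" "v = (\<Sum>d\<in>Delta. of_int (k d) *\<^sub>R d)"
    unfolding nonneg_int_comb_def by auto
  have "coord v e = of_int (k e)" if "e \<in> Delta" for e
  proof -
    have "coord v e = (\<Sum>d\<in>Delta. of_int (k d) * (if e = d then 1 else 0))"
      using k(2) by (simp add: coord_sum coord_scale coord_simple)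
    also have "\<dots> = of_int (k e)"
      using that finite_Delta by (simp add: if_distrib sum.delta cong: if_cong)
    finally show ?thesis .
  qed
  then show "pos_comb v" using k(1) unfolding pos_comb_def by auto
qed

lemma pos_comb_sum:
  assumes "\<And>d. d \<in> Delta \<Longrightarrow> 0 \<le> c d" and "\<And>d. d \<in> Delta \<Longrightarrow> c d \<noteq> 0 \<Longrightarrow> pos_comb (f d)"
  shows "pos_comb (\<Sum>d\<in>Delta. c d *\<^sub>R f d)"
  unfolding pos_comb_def coord_sum coord_scale
proof (intro ballI sum_nonneg)
  fix e d assume "e \<in> Delta" "d \<in> Delta"
  then show "0 \<le> c d * coord (f d) e"
    using assms by (cases "c d = 0") (auto simp: pos_comb_def)
qed

lemma root_pos_or_neg: "b \<in> Phi \<Longrightarrow> pos_comb b \<or> pos_comb (- b)"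
  using root_sign nonneg_int_comb_pos_comb by blast

lemma root_not_pos_and_neg:
  assumes b: "b \<in> Phi" "pos_comb b" shows "\<not> pos_comb (- b)"
proof
  assume "pos_comb (- b)"
  then have "b = 0"
    using b(2) coord_scale[of 0 0] unfolding pos_comb_def
    by (intro coord_inject) (force simp: coord_uminus)
  with b zero_notin_Phi show False by simp
qed

lemma pos_roots_eq: "pos_roots Phi Delta = {b\<in>Phi. pos_comb b}"
  unfolding pos_roots_def using root_sign nonneg_int_comb_pos_comb root_not_pos_and_neg by auto

lemma simple_pos_comb: "d \<in> Delta \<Longrightarrow> pos_comb d"
  unfolding pos_comb_def by (simp add: coord_simple)

lemma simple_not_neg_root: "d \<in> Delta \<Longrightarrow> b \<in> Phi \<Longrightarrow> pos_comb b \<Longrightarrow> b \<noteq> - d"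
  using root_not_pos_and_neg Delta_subset simple_pos_comb by force

text \<open>Reducedness enters only here: a positive root other than d has a positive coordinate
  outside d, which the simple reflection in d does not change.\<close>
lemma simple_refl_pos:
  assumes d: "d \<in> Delta" and b: "b \<in> Phi" "pos_comb b" "b \<noteq> d"
  shows "pos_comb (refl d b)"
proof -
  have "\<exists>e\<in>Delta. e \<noteq> d \<and> coord b e \<noteq> 0"
  proof (rule ccontr)
    assume "\<not> ?thesis"
    then have "b = coord b d *\<^sub>R d"
      using d by (intro coord_inject) (auto simp: coord_scale coord_simple)
    moreover have "coord b d \<ge> 0" using b d unfolding pos_comb_def by auto
    moreover have "coord b d = 1 \<or> coord b d = -1"
      using multiple_in_Phi[of d "coord b d"] \<open>b = coord b d *\<^sub>R d\<close> b(1) d Delta_subset by auto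
    ultimately have "b = d" by auto
    with b show False by simp
  qed
  then obtain e where e: "e \<in> Delta" "e \<noteq> d" "coord b e \<noteq> 0" by auto
  have "coord (refl d b) e = coord b e"
    unfolding refl_def using e d by (simp add: coord_diff coord_scale coord_simple)
  moreover have "coord b e > 0" using e b unfolding pos_comb_def by force
  ultimately have "\<not> pos_comb (- refl d b)"
    using e unfolding pos_comb_def by (auto simp: coord_uminus intro!: bexI[of _ e])
  moreover have "refl d b \<in> Phi" using refl_in_Phi d b Delta_subset by auto
  ultimately show ?thesis using root_pos_or_neg by blast
qed

definition height :: "'a \<Rightarrow> real" where
  "height v = (\<Sum>d\<in>Delta. coord v d)"

lemma height_simple_refl:
  assumes d: "d \<in> Delta" shows "height (refl d b) = height b - 2 * (b \<bullet> d) / (d \<bullet> d)"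
proof -
  have "height (u - v) = height u - height v" for u v
    unfolding height_def by (simp add: coord_diff sum_subtractf)
  moreover have "height (c *\<^sub>R d) = c" for c
    unfolding height_def using d finite_Delta
    by (simp add: coord_scale coord_simple if_distrib sum.delta cong: if_cong)
  ultimately show ?thesis unfolding refl_def by simp
qed

lemma pos_root_has_pos_simple:
  assumes b: "b \<in> Phi" "pos_comb b"
  shows "\<exists>d\<in>Delta. b \<bullet> d > 0"
proof (rule ccontr)
  assume "\<not> ?thesis"
  then have "b \<bullet> b \<le> 0"
    using b unfolding inner_coord_expansion[of b b] pos_comb_def
    by (intro sum_nonpos) (simp add: mult_nonneg_nonpos not_less)
  with b zero_notin_Phi show False by (metis inner_gt_zero_iff not_le)
qed

lemma inner_nonneg_if_dominant:
  assumes "\<And>d. d \<in> Delta \<Longrightarrow> 0 \<le> m \<bullet> d" and "pos_comb v"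
  shows "0 \<le> m \<bullet> v"
  unfolding inner_coord_expansion[of m v]
  using assms unfolding pos_comb_def by (intro sum_nonneg) simp


subsection \<open>Generation of the Weyl group by simple reflections\<close>

lemma pos_root_conj_simple:
  "b \<in> Phi \<Longrightarrow> pos_comb b \<Longrightarrow> \<exists>ys e. set ys \<subseteq> Delta \<and> e \<in> Delta \<and> b = refl_prod ys e"
proof (induction "card {c\<in>Phi. height c < height b}" arbitrary: b rule: less_induct)
  case less
  show ?case
  proof (cases "b \<in> Delta")
    case True
    then show ?thesis by (intro exI[of _ "[]"] exI[of _ b]) simp
  next
    case False
    obtain d where d: "d \<in> Delta" "b \<bullet> d > 0" using pos_root_has_pos_simple[OF less(2,3)] by auto
    have dP: "d \<in> Phi" "d \<noteq> 0" using d Delta_subset zero_notin_Delta by auto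
    define c where "c = refl d b"
    have c: "c \<in> Phi" "pos_comb c"
      unfolding c_def using refl_in_Phi[OF dP(1) less(2)] simple_refl_pos[OF d(1) less(2,3)] False d
      by auto
    have "2 * (b \<bullet> d) / (d \<bullet> d) > 0" using d dP by simp
    then have "height c < height b"
      unfolding c_def using height_simple_refl[OF d(1)] by simp
    then have "{x\<in>Phi. height x < height c} \<subset> {x\<in>Phi. height x < height b}"
      using c by auto
    then have "card {x\<in>Phi. height x < height c} < card {x\<in>Phi. height x < height b}"
      using finite_Phi by (intro psubset_card_mono) auto
    from less(1)[OF this c] obtain ys e where ys: "set ys \<subseteq> Delta" "e \<in> Delta" "c = refl_prod ys e"
      by auto
    have "b = refl_prod (d # ys) e" using ys dP unfolding c_def by (metis comp_apply refl_prod_Cons refl_refl)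
    then show ?thesis using ys d by (intro exI[of _ "d # ys"] exI[of _ e]) auto
  qed
qed

lemma root_conj_simple:
  assumes b: "b \<in> Phi" shows "\<exists>ys e. set ys \<subseteq> Delta \<and> e \<in> Delta \<and> b = refl_prod ys e"
proof (cases "pos_comb b")
  case True
  then show ?thesis using pos_root_conj_simple b by auto
next
  case False
  then obtain ys e where ys: "set ys \<subseteq> Delta" "e \<in> Delta" "- b = refl_prod ys e"
    using pos_root_conj_simple uminus_in_Phi root_pos_or_neg b by blast
  moreover have "e \<noteq> 0" using ys(2) zero_notin_Delta by auto
  ultimately have "b = refl_prod (ys @ [e]) e"
    by (simp add: refl_prod_snoc refl_prod_uminus) (metis minus_minus)
  then show ?thesis using ys by (intro exI[of _ "ys @ [e]"] exI[of _ e]) auto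
qed

lemma refl_simple_word:
  assumes b: "b \<in> Phi" shows "\<exists>zs. set zs \<subseteq> Delta \<and> refl b = refl_prod zs"
proof -
  obtain ys e where ys: "set ys \<subseteq> Delta" "e \<in> Delta" "b = refl_prod ys e"
    using root_conj_simple[OF b] by auto
  have ys0: "0 \<notin> set ys" using ys zero_notin_Delta by auto
  have "refl b y = refl_prod (ys @ [e] @ rev ys) y" for y
  proof -
    have "refl b y = refl (refl_prod ys e) (refl_prod ys (refl_prod (rev ys) y))"
      using ys(3) refl_prod_rev_cancel[OF ys0] by simp
    also have "\<dots> = refl_prod ys (refl e (refl_prod (rev ys) y))"
      by (rule refl_conj[OF refl_prod_linear refl_prod_inner[OF ys0]])
    finally show ?thesis by (simp add: refl_prod_append)
  qed
  then show ?thesis using ys by (intro exI[of _ "ys @ [e] @ rev ys"]) auto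
qed

lemma weyl_group_simple_word: "w \<in> weyl_group Phi \<Longrightarrow> \<exists>ys. set ys \<subseteq> Delta \<and> w = refl_prod ys"
proof -
  have "set xs \<subseteq> Phi \<Longrightarrow> \<exists>ys. set ys \<subseteq> Delta \<and> refl_prod xs = refl_prod ys" for xs
  proof (induction xs)
    case Nil
    then show ?case by (intro exI[of _ "[]"]) simp
  next
    case (Cons a xs)
    obtain ys where "set ys \<subseteq> Delta" "refl_prod xs = refl_prod ys" using Cons by auto
    moreover obtain zs where "set zs \<subseteq> Delta" "refl a = refl_prod zs"
      using refl_simple_word[of a] Cons.prems by auto
    ultimately show ?case by (intro exI[of _ "zs @ ys"]) (simp add: refl_prod_append)
  qed
  then show "w \<in> weyl_group Phi \<Longrightarrow> ?thesis" unfolding weyl_group_def by auto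
qed


lemma weyl_group_in_Phi: "w \<in> weyl_group Phi \<Longrightarrow> b \<in> Phi \<Longrightarrow> w b \<in> Phi"
  unfolding weyl_group_def using refl_prod_in_Phi by auto

lemma refl_in_weyl_group: "a \<in> Phi \<Longrightarrow> refl a \<in> weyl_group Phi"
  unfolding weyl_group_def by (intro CollectI exI[of _ "[a]"]) simp

lemma weyl_group_comp_refl:
  assumes "w \<in> weyl_group Phi" "a \<in> Phi" shows "w \<circ> refl a \<in> weyl_group Phi"
proof -
  obtain xs where "set xs \<subseteq> Phi" "w = refl_prod xs" using assms(1) unfolding weyl_group_def by auto
  then show ?thesis
    using assms(2) unfolding weyl_group_def by (auto intro!: exI[of _ "xs @ [a]"] simp: refl_prod_snoc)
qed

lemma weyl_group_uminus: "w \<in> weyl_group Phi \<Longrightarrow> w (- v) = - w v"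
  unfolding weyl_group_def using refl_prod_uminus by auto

lemma dominant_conj_exists:
  assumes a: "a \<in> Phi"
  shows "\<exists>ys. set ys \<subseteq> Delta \<and> (\<forall>d\<in>Delta. 0 \<le> refl_prod ys a \<bullet> d)"
proof -
  define Orb where "Orb = {refl_prod ys a | ys. set ys \<subseteq> Delta}"
  have "Orb \<subseteq> Phi" unfolding Orb_def using refl_prod_in_Phi a Delta_subset by blast
  then have finite_Orb: "finite Orb" using finite_Phi finite_subset by blast
  have "a \<in> Orb" unfolding Orb_def by (auto intro!: exI[of _ "[]"])
  then have "Max (height ` Orb) \<in> height ` Orb" using finite_Orb by (intro Max_in) auto
  then obtain mu where mu: "mu \<in> Orb" "height mu = Max (height ` Orb)" by auto
  then have highest_in_orbit: "height v \<le> height mu" if "v \<in> Orb" for v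
    using finite_Orb that by simp
  obtain ys where ys: "set ys \<subseteq> Delta" "mu = refl_prod ys a" using mu(1) unfolding Orb_def by auto
  have "0 \<le> mu \<bullet> d" if d: "d \<in> Delta" for d
  proof -
    have "refl d mu \<in> Orb" unfolding Orb_def using ys d by (auto intro!: exI[of _ "d # ys"])
    then have "0 \<le> 2 * (mu \<bullet> d) / (d \<bullet> d)" using highest_in_orbit height_simple_refl[OF d] by fastforce
    moreover have "d \<bullet> d > 0" using d zero_notin_Delta by auto
    ultimately show ?thesis by (simp add: zero_le_divide_iff)
  qed
  then show ?thesis using ys by auto
qed


subsection \<open>Length and inversions\<close>

definition inversions :: "('a \<Rightarrow> 'a) \<Rightarrow> 'a set" where
  "inversions w = {b\<in>Phi. pos_comb b \<and> \<not> pos_comb (w b)}"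

lemma finite_inversions: "finite (inversions w)"
  unfolding inversions_def using finite_Phi by auto

lemma inversions_empty_if_simple_pos:
  assumes pos: "\<And>d. d \<in> Delta \<Longrightarrow> pos_comb (refl_prod xs d)"
  shows "inversions (refl_prod xs) = {}"
proof -
  have "pos_comb (refl_prod xs b)" if "pos_comb b" for b
    unfolding refl_prod_coord_expansion[of xs b]
    using that pos by (intro pos_comb_sum) (auto simp: pos_comb_def)
  then show ?thesis unfolding inversions_def by auto
qed

lemma inversions_comp_simple_refl:
  assumes d: "d \<in> Delta"
  shows "inversions (w \<circ> refl d) - {d} = refl d ` (inversions w - {d})"
proof -
  have d0: "d \<in> Phi" "d \<noteq> 0" using d Delta_subset zero_notin_Delta by auto
  have perm: "refl d b \<in> Phi \<and> pos_comb (refl d b) \<and> refl d b \<noteq> d"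
    if "b \<in> Phi" "pos_comb b" "b \<noteq> d" for b
  proof -
    have "refl d b \<noteq> d" using simple_not_neg_root[OF d that(1,2)] d0 by (metis refl_refl refl_self)
    then show ?thesis using that refl_in_Phi[OF d0(1)] simple_refl_pos[OF d] by blast
  qed
  show ?thesis
  proof (intro equalityI subsetI)
    fix b assume "b \<in> inversions (w \<circ> refl d) - {d}"
    then have "refl d b \<in> inversions w - {d}" "b = refl d (refl d b)"
      using perm d0 unfolding inversions_def by auto
    then show "b \<in> refl d ` (inversions w - {d})" by blast
  next
    fix b assume "b \<in> refl d ` (inversions w - {d})"
    then obtain c where "c \<in> inversions w - {d}" "b = refl d c" by auto
    then show "b \<in> inversions (w \<circ> refl d) - {d}"
      using perm[of c] d0 unfolding inversions_def by auto
  qed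
qed

lemma card_inversions_comp_simple_refl:
  assumes xs: "set xs \<subseteq> Phi" and d: "d \<in> Delta"
  shows "if pos_comb (refl_prod xs d)
    then card (inversions (refl_prod xs \<circ> refl d)) = Suc (card (inversions (refl_prod xs)))
    else card (inversions (refl_prod xs)) = Suc (card (inversions (refl_prod xs \<circ> refl d)))"
proof -
  let ?w = "refl_prod xs"
  have d0: "d \<in> Phi" "d \<noteq> 0" using d Delta_subset zero_notin_Delta by auto
  have wd: "?w d \<in> Phi" using refl_prod_in_Phi[OF xs d0(1)] .
  have "inj_on (refl d) A" for A by (rule inj_onI) (metis d0(2) refl_refl)
  then have same: "card (inversions (?w \<circ> refl d) - {d}) = card (inversions ?w - {d})"
    by (simp add: inversions_comp_simple_refl[OF d] card_image)
  have new: "d \<in> inversions (?w \<circ> refl d) \<longleftrightarrow> pos_comb (?w d)"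
    using d0 simple_pos_comb[OF d] root_not_pos_and_neg[OF wd] root_pos_or_neg[OF wd]
    unfolding inversions_def by (auto simp: refl_prod_uminus)
  have old: "d \<in> inversions ?w \<longleftrightarrow> \<not> pos_comb (?w d)"
    using d0 simple_pos_comb[OF d] unfolding inversions_def by auto
  show ?thesis
  proof (cases "pos_comb (?w d)")
    case True
    then show ?thesis
      using card_Suc_Diff1[OF finite_inversions, of d "?w \<circ> refl d"] same new old by simp
  next
    case False
    then show ?thesis
      using card_Suc_Diff1[OF finite_inversions, of d ?w] same new old by simp
  qed
qed

lemma card_inversions_le_length: "set xs \<subseteq> Delta \<Longrightarrow> card (inversions (refl_prod xs)) \<le> length xs"
proof (induction xs rule: rev_induct)
  case Nil
  then show ?case unfolding inversions_def by simp
next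
  case (snoc d xs)
  then have xs: "set xs \<subseteq> Delta" "d \<in> Delta" by auto
  then have "set xs \<subseteq> Phi" using Delta_subset by auto
  then have "card (inversions (refl_prod xs \<circ> refl d)) \<le> Suc (card (inversions (refl_prod xs)))"
    using card_inversions_comp_simple_refl[of xs d] xs(2) by (simp split: if_splits)
  then show ?case
    using snoc.IH xs unfolding refl_prod_snoc length_append_singleton by linarith
qed

text \<open>The shortest suffix of xs still mapping d to a negative root starts with a letter e
  whose reflection makes a positive root negative; that root must then be e itself, so s_d is
  conjugate to s_e and the two cancel.\<close>
lemma exchange_condition:
  assumes xs: "set xs \<subseteq> Delta" and d: "d \<in> Delta" and neg: "\<not> pos_comb (refl_prod xs d)"
  shows "\<exists>i<length xs. refl_prod (xs @ [d]) = refl_prod (take i xs @ drop (Suc i) xs)"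
proof -
  define \<beta> where "\<beta> j = refl_prod (drop j xs) d" for j
  define S where "S = {j. j \<le> length xs \<and> \<not> pos_comb (\<beta> j)}"
  have finS: "finite S" unfolding S_def by (rule finite_subset[of _ "{..length xs}"]) auto
  have "0 \<in> S" using neg unfolding S_def \<beta>_def by simp
  define i where "i = Max S"
  have iS: "i \<in> S" unfolding i_def using finS \<open>0 \<in> S\<close> Max_in by blast
  have "length xs \<notin> S" unfolding S_def \<beta>_def using simple_pos_comb[OF d] by simp
  then have ilt: "i < length xs" using iS unfolding S_def by (auto simp: le_less)
  have "Suc i \<notin> S" using Max_ge[OF finS, of "Suc i"] unfolding i_def[symmetric] by auto
  then have pos_next: "pos_comb (\<beta> (Suc i))" using ilt unfolding S_def by auto
  define e where "e = xs ! i"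
  have "e \<in> Delta" using xs ilt unfolding e_def by auto
  then have eD: "e \<in> Delta" "e \<noteq> 0" using zero_notin_Delta by auto
  have dropi: "drop i xs = e # drop (Suc i) xs"
    unfolding e_def using ilt by (simp add: Cons_nth_drop_Suc)
  define v where "v = refl_prod (drop (Suc i) xs)"
  have v_Phi: "set (drop (Suc i) xs) \<subseteq> Phi" using xs Delta_subset set_drop_subset by fastforce
  have "\<beta> (Suc i) \<in> Phi" unfolding \<beta>_def using refl_prod_in_Phi[OF v_Phi] d Delta_subset by auto
  moreover have "\<not> pos_comb (refl e (\<beta> (Suc i)))"
    using iS unfolding S_def \<beta>_def by (simp add: dropi)
  ultimately have "v d = e" using simple_refl_pos[OF eD(1) _ pos_next] unfolding \<beta>_def v_def by blast
  moreover have "0 \<notin> set (drop (Suc i) xs)" using v_Phi zero_notin_Phi by auto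
  ultimately have conj: "v (refl d x) = refl e (v x)" for x
    using refl_conj[OF refl_prod_linear refl_prod_inner, of "drop (Suc i) xs" d x]
    unfolding v_def by simp
  have split: "xs @ [d] = take i xs @ [e] @ drop (Suc i) xs @ [d]"
    using dropi by (metis append_take_drop_id append_Cons append_Nil append_assoc)
  have "refl_prod (xs @ [d]) x = refl_prod (take i xs @ drop (Suc i) xs) x" for x
  proof -
    have "refl_prod (xs @ [d]) x = refl_prod (take i xs) (refl e (v (refl d x)))"
      unfolding split v_def by (simp add: refl_prod_append)
    also have "\<dots> = refl_prod (take i xs) (v x)" using eD(2) by (simp add: conj)
    finally show ?thesis by (simp add: v_def refl_prod_append)
  qed
  then show ?thesis using ilt by blast
qed

lemma weyl_length_le: "set xs \<subseteq> Delta \<Longrightarrow> weyl_length Delta (refl_prod xs) \<le> length xs"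
  unfolding weyl_length_def by (rule Least_le) blast

lemma reduced_word_exists:
  "set xs \<subseteq> Delta \<Longrightarrow>
    \<exists>ys. length ys = weyl_length Delta (refl_prod xs) \<and> set ys \<subseteq> Delta \<and> refl_prod xs = refl_prod ys"
  unfolding weyl_length_def
  by (rule LeastI_ex[where P = "\<lambda>n. \<exists>ys. length ys = n \<and> set ys \<subseteq> Delta \<and> refl_prod xs = refl_prod ys"])
    blast

lemma reduced_word_last_inversion:
  assumes ys: "set (zs @ [d]) \<subseteq> Delta" "length (zs @ [d]) = weyl_length Delta (refl_prod (zs @ [d]))"
  shows "d \<in> inversions (refl_prod (zs @ [d]))"
proof -
  have zs: "set zs \<subseteq> Delta" "d \<in> Delta" using ys by auto
  then have d0: "d \<in> Phi" "d \<noteq> 0" using zero_notin_Delta Delta_subset by auto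
  have zd: "refl_prod zs d \<in> Phi" using refl_prod_in_Phi zs d0 Delta_subset by auto
  have "\<not> pos_comb (refl_prod (zs @ [d]) d)"
  proof
    assume "pos_comb (refl_prod (zs @ [d]) d)"
    then have "\<not> pos_comb (refl_prod zs d)"
      using root_not_pos_and_neg[OF uminus_in_Phi[OF zd]] d0 by (simp add: refl_prod_snoc refl_prod_uminus)
    from exchange_condition[OF zs this] obtain i where i: "i < length zs"
      "refl_prod (zs @ [d]) = refl_prod (take i zs @ drop (Suc i) zs)" by auto
    have "set (take i zs @ drop (Suc i) zs) \<subseteq> Delta"
      using zs set_take_subset set_drop_subset by fastforce
    from weyl_length_le[OF this] i ys(2) show False by simp
  qed
  then show ?thesis unfolding inversions_def using d0 simple_pos_comb zs by auto
qed

lemma weyl_length_eq_card_inversions: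
  "set xs \<subseteq> Delta \<Longrightarrow> weyl_length Delta (refl_prod xs) = card (inversions (refl_prod xs))"
proof -
  have le: "weyl_length Delta (refl_prod xs) \<le> n"
    if "set xs \<subseteq> Delta" "card (inversions (refl_prod xs)) = n" for xs n
    using that
  proof (induction n arbitrary: xs)
    case 0
    obtain ys where ys: "length ys = weyl_length Delta (refl_prod xs)" "set ys \<subseteq> Delta"
      "refl_prod xs = refl_prod ys" using reduced_word_exists[OF "0.prems"(1)] by auto
    have "ys = []"
    proof (cases ys rule: rev_cases)
      case (snoc zs d)
      then show ?thesis
        using reduced_word_last_inversion[of zs d] ys "0.prems"(2) finite_inversions by auto
    qed
    then show ?case using ys(1) by simp
  next
    case (Suc n)
    have "inversions (refl_prod xs) \<noteq> {}" using Suc.prems by auto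
    then obtain d where d: "d \<in> Delta" "\<not> pos_comb (refl_prod xs d)"
      using inversions_empty_if_simple_pos by blast
    have xsP: "set xs \<subseteq> Phi" using Suc.prems Delta_subset by auto
    have "card (inversions (refl_prod (xs @ [d]))) = n"
      using card_inversions_comp_simple_refl[OF xsP d(1)] d Suc.prems by (simp add: refl_prod_snoc)
    then have "weyl_length Delta (refl_prod (xs @ [d])) \<le> n" using Suc.IH Suc.prems d by auto
    moreover obtain ys where ys: "length ys = weyl_length Delta (refl_prod (xs @ [d]))"
      "set ys \<subseteq> Delta" "refl_prod (xs @ [d]) = refl_prod ys"
      using reduced_word_exists[of "xs @ [d]"] Suc.prems d by auto
    moreover have "refl_prod (ys @ [d]) = refl_prod xs"
    proof -
      have "d \<noteq> 0" using d zero_notin_Delta by auto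
      then show ?thesis using ys(3) by (simp add: refl_prod_snoc fun_eq_iff) (metis comp_apply refl_refl)
    qed
    ultimately show ?case using weyl_length_le[of "ys @ [d]"] d by fastforce
  qed
  show "set xs \<subseteq> Delta \<Longrightarrow> ?thesis"
    using reduced_word_exists card_inversions_le_length le by (metis le_antisym)
qed

lemma inversions_empty_imp_id:
  assumes "set xs \<subseteq> Delta" "inversions (refl_prod xs) = {}"
  shows "refl_prod xs = id"
  using reduced_word_exists[OF assms(1)] weyl_length_eq_card_inversions[OF assms(1)] assms(2)
  by auto

lemma weyl_group_length_eq_card_inversions:
  "w \<in> weyl_group Phi \<Longrightarrow> weyl_length Delta w = card (inversions w)"
  using weyl_group_simple_word weyl_length_eq_card_inversions by blast

end


subsection \<open>The highest root\<close>

locale highest_root_system = based_root_system +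
  fixes h :: 'a
  assumes highest: "highest_root Phi Delta h"
begin

abbreviation X :: "('a \<Rightarrow> 'a) set" where
  "X \<equiv> X_I Phi Delta (I_tilde Delta h)"

lemma h_in_Phi: "h \<in> Phi"
  and h_dominates: "b \<in> Phi \<Longrightarrow> pos_comb (h - b)"
  using highest nonneg_int_comb_pos_comb unfolding highest_root_def by auto

lemma h_nonzero: "h \<noteq> 0"
  using h_in_Phi zero_notin_Phi by auto

lemma h_pos_comb: "pos_comb h"
  using h_dominates[OF uminus_in_Phi[OF h_in_Phi]] unfolding pos_comb_def by (auto simp: coord_add)

lemma h_dominant: "d \<in> Delta \<Longrightarrow> 0 \<le> h \<bullet> d"
proof -
  assume d: "d \<in> Delta"
  then have d0: "d \<in> Phi" "d \<noteq> 0" using Delta_subset zero_notin_Delta by auto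
  have "0 \<le> coord (h - refl d h) d"
    using h_dominates[OF refl_in_Phi[OF d0(1) h_in_Phi]] d unfolding pos_comb_def by auto
  also have "coord (h - refl d h) d = 2 * (h \<bullet> d) / (d \<bullet> d)"
    unfolding refl_def using d by (simp add: coord_diff coord_scale coord_simple)
  finally have "0 \<le> 2 * (h \<bullet> d) / (d \<bullet> d)" .
  moreover have "d \<bullet> d > 0" using d0 by simp
  ultimately show ?thesis by (simp add: zero_le_divide_iff)
qed

lemma inner_h_nonneg: "pos_comb v \<Longrightarrow> 0 \<le> h \<bullet> v"
  using inner_nonneg_if_dominant h_dominant by blast

lemma orth_h_support:
  assumes v: "pos_comb v" "h \<bullet> v = 0" and d: "d \<in> Delta" "coord v d \<noteq> 0"
  shows "h \<bullet> d = 0"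
proof -
  have "\<forall>d\<in>Delta. 0 \<le> coord v d * (h \<bullet> d)"
    using v h_dominant unfolding pos_comb_def by auto
  moreover have "(\<Sum>d\<in>Delta. coord v d * (h \<bullet> d)) = 0"
    using v(2) inner_coord_expansion[of h v] by simp
  ultimately have "\<forall>d\<in>Delta. coord v d * (h \<bullet> d) = 0"
    by (simp add: sum_nonneg_eq_0_iff[OF finite_Delta])
  then show ?thesis using d by auto
qed

lemma pos_roots_I_eq: "pos_roots_I Phi Delta (I_tilde Delta h) = {b\<in>Phi. pos_comb b \<and> h \<bullet> b = 0}"
proof -
  have "v \<in> span (I_tilde Delta h) \<longleftrightarrow> h \<bullet> v = 0" if "pos_comb v" for v
  proof
    assume "v \<in> span (I_tilde Delta h)"
    moreover have "I_tilde Delta h \<subseteq> {x. h \<bullet> x = 0}" unfolding I_tilde_def by auto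
    ultimately show "h \<bullet> v = 0" using span_minimal[OF _ subspace_hyperplane[of h]] by blast
  next
    assume "h \<bullet> v = 0"
    then have "coord v d *\<^sub>R d \<in> span (I_tilde Delta h)" if "d \<in> Delta" for d
      using orth_h_support[OF \<open>pos_comb v\<close> _ that] that
      by (cases "coord v d = 0") (auto simp: I_tilde_def span_zero intro: span_base span_scale)
    then show "v \<in> span (I_tilde Delta h)" by (subst coord_expansion) (rule span_sum)
  qed
  then show ?thesis unfolding pos_roots_I_def pos_roots_eq by auto
qed

lemma X_iff:
  "w \<in> X \<longleftrightarrow> w \<in> weyl_group Phi \<and> (\<forall>b\<in>Phi. pos_comb b \<and> h \<bullet> b = 0 \<longrightarrow> pos_comb (w b))"
  unfolding X_I_def pos_roots_I_eq pos_roots_eq using weyl_group_in_Phi by auto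

lemma refl_h_pos_iff:
  assumes b: "b \<in> Phi" "pos_comb b"
  shows "pos_comb (refl h b) \<longleftrightarrow> h \<bullet> b = 0"
proof
  assume "h \<bullet> b = 0"
  then show "pos_comb (refl h b)" using b by (simp add: refl_orth inner_commute)
next
  assume pos: "pos_comb (refl h b)"
  show "h \<bullet> b = 0"
  proof (rule ccontr)
    assume "h \<bullet> b \<noteq> 0"
    then have "0 < h \<bullet> b" using inner_h_nonneg[OF b(2)] by simp
    then have "0 < 2 * (b \<bullet> h) / (h \<bullet> h)" using h_nonzero by (simp add: inner_commute)
    moreover obtain k :: int where "2 * (b \<bullet> h) / (h \<bullet> h) = of_int k"
      using cartan_integer[OF h_in_Phi b(1)] by (elim Ints_cases)
    ultimately have k: "2 * (b \<bullet> h) / (h \<bullet> h) = of_int k" "0 < k" by auto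
    have "- refl h b = (h - b) + (of_int k - 1) *\<^sub>R h"
      unfolding refl_def k(1) by (simp add: algebra_simps)
    moreover have "pos_comb ((of_int k - 1) *\<^sub>R h)"
      using h_pos_comb k(2) unfolding pos_comb_def by (simp add: coord_scale)
    ultimately have "pos_comb (- refl h b)"
      using h_dominates[OF b(1)] unfolding pos_comb_def by (simp add: coord_add)
    then show False
      using pos root_not_pos_and_neg[OF refl_in_Phi[OF h_in_Phi b(1)]] by blast
  qed
qed

lemma inversions_comp_refl_h_subset:
  assumes w: "w \<in> X"
  shows "inversions (w \<circ> refl h) \<subseteq> inversions (refl h)"
proof
  fix b assume "b \<in> inversions (w \<circ> refl h)"
  then have b: "b \<in> Phi" "pos_comb b" "\<not> pos_comb (w (refl h b))" unfolding inversions_def by auto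
  show "b \<in> inversions (refl h)"
  proof (rule ccontr)
    assume "b \<notin> inversions (refl h)"
    then have "h \<bullet> b = 0" using b refl_h_pos_iff unfolding inversions_def by auto
    then show False using w b unfolding X_iff by (simp add: refl_orth inner_commute)
  qed
qed

lemma inversions_refl_h_diff:
  assumes w: "w \<in> X"
  shows "inversions (refl h) - inversions (w \<circ> refl h) = (\<lambda>b. - refl h b) ` inversions w"
proof -
  have W: "w \<in> weyl_group Phi" using w unfolding X_iff by blast
  have s_uminus: "refl h (- v) = - refl h v" for v by (rule linear_neg[OF refl_linear])
  have s_Phi: "v \<in> Phi \<Longrightarrow> - refl h v \<in> Phi" for v
    using refl_in_Phi[OF h_in_Phi] uminus_in_Phi by blast
  have to_w: "- refl h b \<in> inversions w" if "b \<in> inversions (refl h) - inversions (w \<circ> refl h)" for b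
  proof -
    have b: "b \<in> Phi" "\<not> pos_comb (refl h b)" "pos_comb (w (refl h b))"
      using that unfolding inversions_def by auto
    then show ?thesis
      using s_Phi root_pos_or_neg[OF refl_in_Phi[OF h_in_Phi b(1)]]
        root_not_pos_and_neg[OF weyl_group_in_Phi[OF W refl_in_Phi[OF h_in_Phi b(1)]]]
      unfolding inversions_def by (auto simp: weyl_group_uminus[OF W])
  qed
  have from_w: "- refl h c \<in> inversions (refl h) - inversions (w \<circ> refl h)" if "c \<in> inversions w" for c
  proof -
    have c: "c \<in> Phi" "pos_comb c" "\<not> pos_comb (w c)" using that unfolding inversions_def by auto
    then have "h \<bullet> c \<noteq> 0" using w unfolding X_iff by blast
    then have "\<not> pos_comb (refl h c)" using refl_h_pos_iff c by blast
    then show ?thesis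
      using c s_Phi root_pos_or_neg[OF refl_in_Phi[OF h_in_Phi c(1)]] root_pos_or_neg[OF weyl_group_in_Phi[OF W c(1)]]
        root_not_pos_and_neg[OF c(1,2)] h_nonzero
      unfolding inversions_def by (auto simp: s_uminus weyl_group_uminus[OF W])
  qed
  have involution: "- refl h (- refl h b) = b" for b using h_nonzero by (simp add: s_uminus)
  show ?thesis
  proof (intro equalityI subsetI)
    fix b assume "b \<in> inversions (refl h) - inversions (w \<circ> refl h)"
    then show "b \<in> (\<lambda>b. - refl h b) ` inversions w"
      using to_w involution by (metis image_eqI)
  next
    fix b assume "b \<in> (\<lambda>b. - refl h b) ` inversions w"
    then show "b \<in> inversions (refl h) - inversions (w \<circ> refl h)" using from_w by blast
  qed
qed

lemma weyl_length_comp_refl_h: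
  assumes w: "w \<in> X"
  shows "weyl_length Delta (w \<circ> refl h) + weyl_length Delta w = weyl_length Delta (refl h)"
proof -
  have W: "w \<in> weyl_group Phi" using w unfolding X_iff by blast
  have "inj_on (\<lambda>b. - refl h b) A" for A
    by (rule inj_onI) (metis h_nonzero neg_equal_iff_equal refl_refl)
  then have "card (inversions (refl h) - inversions (w \<circ> refl h)) = card (inversions w)"
    unfolding inversions_refl_h_diff[OF w] by (simp add: card_image)
  moreover have "card (inversions (refl h)) =
      card (inversions (w \<circ> refl h)) + card (inversions (refl h) - inversions (w \<circ> refl h))"
    using inversions_comp_refl_h_subset[OF w] finite_inversions by (simp add: card_Diff_subset card_mono)
  ultimately show ?thesis
    using weyl_group_length_eq_card_inversions W h_in_Phi
      refl_in_weyl_group weyl_group_comp_refl by simp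
qed

lemma dominant_long_root_eq_h:
  assumes mu: "mu \<in> Phi" "\<And>d. d \<in> Delta \<Longrightarrow> 0 \<le> mu \<bullet> d" and long: "h \<bullet> h \<le> mu \<bullet> mu"
  shows "mu = h"
proof -
  have "0 \<le> h \<bullet> (h - mu)" "0 \<le> mu \<bullet> (h - mu)"
    using inner_nonneg_if_dominant h_dominant mu(2) h_dominates[OF mu(1)] by auto
  moreover have "h \<bullet> (h - mu) + mu \<bullet> (h - mu) = h \<bullet> h - mu \<bullet> mu"
    by (simp add: inner_diff_left inner_diff_right inner_commute[of mu h])
  ultimately have "(h - mu) \<bullet> (h - mu) = 0"
    using long by (simp add: inner_diff_left)
  then show ?thesis by simp
qed

lemma long_root_conj_h:
  assumes a: "a \<in> long_roots Phi"
  shows "\<exists>ys. set ys \<subseteq> Delta \<and> refl_prod ys h = a"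
proof -
  have aP: "a \<in> Phi" "norm h \<le> norm a" using a h_in_Phi unfolding long_roots_def by auto
  obtain ys where ys: "set ys \<subseteq> Delta" "\<forall>d\<in>Delta. 0 \<le> refl_prod ys a \<bullet> d"
    using dominant_conj_exists[OF aP(1)] by auto
  have ys0: "0 \<notin> set ys" using ys(1) zero_notin_Delta by auto
  have "h \<bullet> h \<le> a \<bullet> a" using aP(2) by (simp add: norm_le)
  then have "refl_prod ys a = h"
    using dominant_long_root_eq_h[of "refl_prod ys a"] refl_prod_in_Phi[of ys a] ys aP(1) Delta_subset
      refl_prod_inner[OF ys0]
    by auto
  then have "refl_prod (rev ys) h = a" using refl_prod_cancel_rev[OF ys0] by metis
  then show ?thesis using ys by (intro exI[of _ "rev ys"]) auto
qed

lemma simple_word_in_X: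
  assumes xs: "set xs \<subseteq> Delta"
    and pos: "\<And>d. d \<in> Delta \<Longrightarrow> h \<bullet> d = 0 \<Longrightarrow> pos_comb (refl_prod xs d)"
  shows "refl_prod xs \<in> X"
proof -
  have "pos_comb (refl_prod xs b)" if "pos_comb b" "h \<bullet> b = 0" for b
    unfolding refl_prod_coord_expansion[of xs b]
    using that pos orth_h_support by (intro pos_comb_sum) (auto simp: pos_comb_def)
  moreover have "refl_prod xs \<in> weyl_group Phi" using xs Delta_subset unfolding weyl_group_def by auto
  ultimately show ?thesis unfolding X_iff by blast
qed

text \<open>A word sending h to a with the fewest inversions lies in X: appending a simple
  reflection that fixes h but is an inversion would remove one inversion.\<close>
lemma X_ex:
  assumes a: "a \<in> long_roots Phi"
  shows "\<exists>w\<in>X. w h = a"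
proof -
  let ?P = "\<lambda>zs. set zs \<subseteq> Delta \<and> refl_prod zs h = a"
  obtain zs where zs: "?P zs" "\<And>ys. ?P ys \<Longrightarrow> card (inversions (refl_prod zs)) \<le> card (inversions (refl_prod ys))"
    using ex_has_least_nat[of ?P _ "\<lambda>zs. card (inversions (refl_prod zs))"] long_root_conj_h[OF a] by blast
  have "pos_comb (refl_prod zs d)" if d: "d \<in> Delta" "h \<bullet> d = 0" for d
  proof (rule ccontr)
    assume neg: "\<not> pos_comb (refl_prod zs d)"
    have "?P (zs @ [d])" using zs d refl_orth[of h d] by (simp add: refl_prod_snoc inner_commute)
    then have "card (inversions (refl_prod zs)) \<le> card (inversions (refl_prod (zs @ [d])))" using zs(2) by blast
    moreover have "set zs \<subseteq> Phi" using zs Delta_subset by auto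
    ultimately show False
      using card_inversions_comp_simple_refl[of zs d] neg d by (simp add: refl_prod_snoc)
  qed
  then show ?thesis using simple_word_in_X zs by blast
qed

lemma X_unique:
  assumes w1: "w1 \<in> X" and w2: "w2 \<in> X" and eq: "w1 h = w2 h"
  shows "w1 = w2"
proof -
  obtain ys1 ys2 where y1: "set ys1 \<subseteq> Delta" "w1 = refl_prod ys1"
    and y2: "set ys2 \<subseteq> Delta" "w2 = refl_prod ys2"
    using w1 w2 weyl_group_simple_word unfolding X_iff by meson
  have z1: "0 \<notin> set ys1" using y1 zero_notin_Delta by auto
  define u where "u = refl_prod (rev ys1 @ ys2)"
  have u: "set (rev ys1 @ ys2) \<subseteq> Delta" using y1 y2 by auto
  have w2_eq: "w2 x = w1 (u x)" for x
    unfolding u_def using y1 y2 refl_prod_rev_cancel[OF z1] by (simp add: refl_prod_append)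
  have "u h = refl_prod (rev ys1) (w1 h)" unfolding u_def eq y2(2) by (simp add: refl_prod_append)
  then have uh: "u h = h" using refl_prod_cancel_rev[OF z1] y1(2) by simp
  have "pos_comb (u d)" if d: "d \<in> Delta" for d
  proof (rule ccontr)
    assume neg: "\<not> pos_comb (u d)"
    have dP: "d \<in> Phi" using d Delta_subset by auto
    then have ud: "u d \<in> Phi" using refl_prod_in_Phi u Delta_subset unfolding u_def by blast
    then have nud: "- u d \<in> Phi" "pos_comb (- u d)" using neg root_pos_or_neg uminus_in_Phi by auto
    text \<open>u fixes h and preserves the inner product, so both d and -u(d) are orthogonal to h.\<close>
    have "h \<bullet> u d = h \<bullet> d"
      using refl_prod_inner[of "rev ys1 @ ys2" h d] u zero_notin_Delta uh unfolding u_def by auto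
    then have "h \<bullet> d = 0" "h \<bullet> (- u d) = 0"
      using inner_h_nonneg[OF nud(2)] h_dominant[OF d] by auto
    then have "pos_comb (w2 d)" "pos_comb (w1 (- u d))"
      using w1 w2 dP nud simple_pos_comb[OF d] unfolding X_iff by auto
    moreover have "w1 (- u d) = - w2 d"
      using w1 weyl_group_uminus w2_eq unfolding X_iff by auto
    ultimately show False
      using root_not_pos_and_neg weyl_group_in_Phi w2 dP unfolding X_iff by metis
  qed
  then have "u = id" using inversions_empty_imp_id[OF u] inversions_empty_if_simple_pos unfolding u_def by blast
  then show ?thesis using w2_eq by (auto simp: fun_eq_iff)
qed

lemma x_root_in_X:
  assumes "a \<in> long_roots Phi"
  shows "x_root Phi Delta h a \<in> X"
proof -
  have "\<exists>!w. w \<in> X \<and> w h = a" using X_ex[OF assms] X_unique by blast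
  then show ?thesis unfolding x_root_def by (rule theI'[THEN conjunct1])
qed

end


theorem proposition1p6:
  fixes Phi Delta :: "'a::euclidean_space set" and h a :: 'a
  assumes "reduced_root_system Phi"
    and "irreducible_root_system Phi"
    and "root_basis Phi Delta"
    and "highest_root Phi Delta h"
    and "a \<in> pos_roots Phi Delta"
    and "a \<in> long_roots Phi"
  shows "int (weyl_length Delta (x_root Phi Delta h a \<circ> refl h))
         = int (weyl_length Delta (refl h)) - int (weyl_length Delta (x_root Phi Delta h a))"
proof -
  interpret highest_root_system Phi Delta h
    using assms(1,3,4) by unfold_locales
  from weyl_length_comp_refl_h[OF x_root_in_X[OF assms(6)]] show ?thesis by linarith
qed

end
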